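(* Let $M$ and $N$ be $n$-manifolds with bounded geometry and let $(f_j)$ be a sequence of $R$-uniformly $k$-to-one $L$-LQ-mappings $M\to N$ converging locally uniformly to a continuous mapping $f\colon M\to N$. Then $f$ is an $R$-uniformly $k$-to-one $L$-LQ-mapping.
   Context: A metric manifold $M$ has bounded geometry if it is a complete length space and there exist $C\ge1$, $R_0>0$ such that for every $x\in M$ there is a $C$-bilipschitz map $B_M(x,R_0)\to B_{\mathbb{R}^n}(0,R_0)$; $B_X(x,r)$ denotes the open ball. A map $f\colon M\to N$ is an $L$-LQ-mapping if $B_N(f(x),L^{-1}r)\subset f(B_M(x,r))\subset B_N(f(x),Lr)$ for all $x\in M$, $r>0$. A map $f\colon X\to Y$ is $R$-uniformly $k$-to-one if $\#\big(f^{-1}\{f(x)\}\cap B_X(x,R)\big)\le k$ for all $x\in X$. *)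

theory Defs
  imports "HOL-Analysis.Analysis"
begin

definition curve_length :: "(real \<Rightarrow> 'a::metric_space) \<Rightarrow> ereal" where
  "curve_length \<gamma> =
     (SUP p \<in> {(m, t). t 0 = (0::real) \<and> t m = 1 \<and> (\<forall>i<m. t i \<le> t (Suc i))}.
        ereal (\<Sum>i<fst p. dist (\<gamma> (snd p i)) (\<gamma> (snd p (Suc i)))))"

definition length_space :: "'a::metric_space itself \<Rightarrow> bool" where
  "length_space _ \<longleftrightarrow>
     (\<forall>x y::'a. ereal (dist x y) =
        (INF \<gamma> \<in> {\<gamma>. continuous_on {0..1} \<gamma> \<and> \<gamma> 0 = x \<and> \<gamma> 1 = y}. curve_length \<gamma>))"

definition bilipschitz_on :: "real \<Rightarrow> 'a::metric_space set \<Rightarrow> ('a \<Rightarrow> 'b::metric_space) \<Rightarrow> bool" where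
  "bilipschitz_on C S \<phi> \<longleftrightarrow>
     (\<forall>a\<in>S. \<forall>b\<in>S. dist a b / C \<le> dist (\<phi> a) (\<phi> b) \<and> dist (\<phi> a) (\<phi> b) \<le> C * dist a b)"

definition topological_manifold :: "'a::metric_space itself \<Rightarrow> 'e::euclidean_space itself \<Rightarrow> bool" where
  "topological_manifold _ _ \<longleftrightarrow>
     (\<forall>x::'a. \<exists>U (V::'e set) \<phi> \<psi>. open U \<and> x \<in> U \<and> open V \<and> homeomorphism U V \<phi> \<psi>)"

definition bounded_geometry :: "'a::metric_space itself \<Rightarrow> 'e::euclidean_space itself \<Rightarrow> bool" where
  "bounded_geometry TA TE \<longleftrightarrow>
     topological_manifold TA TE \<and> complete (UNIV::'a set) \<and> length_space TA \<and>
     (\<exists>C R0. C \<ge> 1 \<and> R0 > 0 \<and>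
        (\<forall>x::'a. \<exists>\<phi>::'a \<Rightarrow> 'e. \<phi> ` ball x R0 \<subseteq> ball 0 R0 \<and> bilipschitz_on C (ball x R0) \<phi>))"

definition LQ_map :: "real \<Rightarrow> ('a::metric_space \<Rightarrow> 'b::metric_space) \<Rightarrow> bool" where
  "LQ_map L f \<longleftrightarrow>
     (\<forall>x r. r > 0 \<longrightarrow> ball (f x) (r / L) \<subseteq> f ` ball x r \<and> f ` ball x r \<subseteq> ball (f x) (L * r))"

definition uniformly_k_to_one :: "real \<Rightarrow> nat \<Rightarrow> ('a::metric_space \<Rightarrow> 'b) \<Rightarrow> bool" where
  "uniformly_k_to_one R k f \<longleftrightarrow>
     (\<forall>x. finite (f -` {f x} \<inter> ball x R) \<and> card (f -` {f x} \<inter> ball x R) \<le> k)"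

definition locally_uniform_convergence ::
    "(nat \<Rightarrow> 'a::topological_space \<Rightarrow> 'b::metric_space) \<Rightarrow> ('a \<Rightarrow> 'b) \<Rightarrow> bool" where
  "locally_uniform_convergence fs f \<longleftrightarrow>
     (\<forall>x. \<exists>U. open U \<and> x \<in> U \<and> uniform_limit U fs f sequentially)"

end

theory Submission
  imports Defs
begin

(* The proof has three parts.

   1. Upper LQ-inclusion: every L-LQ-map is L-Lipschitz, and pointwise limits of
      L-Lipschitz maps are L-Lipschitz.
   2. Lower LQ-inclusion: bounded geometry of M makes closed balls of radius < \<rho>
      compact.  A compactness argument shows that f is co-Lipschitz up to scale \<rho>
      (a point near f(x) has an f-preimage near x), and since N is a length space
      any point of N is reached from f(x) by a chain of short steps of total length
      almost d(f x, z); lifting the chain step by step removes the scale restriction.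
   3. Uniformly k-to-one: finitely many points of a fibre of f near x are well
      separated; for large j each of them is moved slightly into one fibre of fs j,
      injectively, so there are at most k of them. *)

section \<open>LQ-mappings and Lipschitz bounds\<close>

lemma LQ_map_pos:
  assumes "LQ_map L g"
  shows "L > 0"
proof -
  fix x
  have "g x \<in> g ` ball x 1" by simp
  also have "\<dots> \<subseteq> ball (g x) (L * 1)"
    using assms[unfolded LQ_map_def, rule_format, of 1 x] by simp
  finally show ?thesis by simp
qed

lemma LQ_map_lipschitz:
  assumes "LQ_map L g"
  shows "dist (g a) (g b) \<le> L * dist a b"
proof (rule field_le_epsilon)
  fix e :: real assume e: "e > 0"
  have L: "L > 0" using LQ_map_pos[OF assms] .
  define r where "r = dist a b + e / L"
  have r: "r > 0" using e L unfolding r_def by (simp add: add_nonneg_pos)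
  have "g b \<in> g ` ball a r" using e L unfolding r_def by (simp add: dist_commute)
  also have "\<dots> \<subseteq> ball (g a) (L * r)"
    using assms r unfolding LQ_map_def by blast
  finally have "dist (g a) (g b) < L * r" by simp
  also have "L * r = L * dist a b + e" using L unfolding r_def by (simp add: field_simps)
  finally show "dist (g a) (g b) \<le> L * dist a b + e" by simp
qed

lemma LQ_mapI:
  assumes L: "L > 0"
    and lip: "\<And>a b. dist (f a) (f b) \<le> L * dist a b"
    and co: "\<And>x r. ball (f x) (r / L) \<subseteq> f ` ball x r"
  shows "LQ_map L f"
  unfolding LQ_map_def
proof (intro allI impI conjI co subsetI)
  fix x r v assume "v \<in> f ` ball x r"
  then obtain y where y: "dist x y < r" and v: "v = f y" by auto
  have "dist (f x) (f y) \<le> L * dist x y" by (rule lip)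
  also have "\<dots> < L * r" using y L by simp
  finally show "v \<in> ball (f x) (L * r)" unfolding v by simp
qed

lemma locally_uniform_convergence_pointwise:
  assumes "locally_uniform_convergence fs f"
  shows "(\<lambda>j. fs j x) \<longlonglongrightarrow> f x"
proof -
  obtain U where "x \<in> U" "uniform_limit U fs f sequentially"
    using assms unfolding locally_uniform_convergence_def by blast
  then show ?thesis by (intro tendsto_uniform_limitI)
qed

lemma lipschitz_pointwise_limit:
  assumes lip: "\<And>j a b. dist (g j a) (g j b) \<le> L * dist a b"
    and lim: "\<And>x. (\<lambda>j. g j x) \<longlonglongrightarrow> f x"
  shows "dist (f a) (f b) \<le> L * dist a b"
proof -
  have "(\<lambda>j. dist (g j a) (g j b)) \<longlonglongrightarrow> dist (f a) (f b)"
    by (intro tendsto_dist lim)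
  then show ?thesis using lip by (intro LIMSEQ_le_const2) auto
qed

lemma limit_of_preimages:
  assumes lip: "\<And>n a b. dist (g n a) (g n b) \<le> L * dist a b"
    and gl: "(\<lambda>n. g n l) \<longlonglongrightarrow> f l" and ul: "u \<longlonglongrightarrow> l" and gu: "\<And>n. g n (u n) = z"
  shows "f l = z"
proof -
  have "(\<lambda>n. dist (u n) l) \<longlonglongrightarrow> 0" using ul by (rule tendsto_dist_iff[THEN iffD1])
  then have lim0: "(\<lambda>n. L * dist (u n) l) \<longlonglongrightarrow> 0" by (rule tendsto_mult_right_zero)
  have "norm (dist (g n l) z) \<le> L * dist (u n) l" for n
  proof -
    have "norm (dist (g n l) z) = dist (g n l) (g n (u n))" using gu[of n] by simp
    also have "\<dots> \<le> L * dist l (u n)" by (rule lip)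
    finally show ?thesis by (simp only: dist_commute)
  qed
  then have "(\<lambda>n. dist (g n l) z) \<longlonglongrightarrow> 0"
    by (intro Lim_null_comparison[OF always_eventually lim0] allI)
  then have "(\<lambda>n. g n l) \<longlonglongrightarrow> z" by (rule tendsto_dist_iff[THEN iffD2])
  then show ?thesis using gl by (rule LIMSEQ_unique[symmetric])
qed

section \<open>Compactness from bounded geometry\<close>

lemma bilipschitz_Cauchy:
  assumes bl: "bilipschitz_on C S \<phi>" and C: "C > 0"
    and u: "\<And>n. u n \<in> S" and cauchy: "Cauchy (\<phi> \<circ> u)"
  shows "Cauchy u"
proof (rule metric_CauchyI)
  fix e :: real assume "e > 0"
  then obtain M where M: "\<forall>m\<ge>M. \<forall>n\<ge>M. dist ((\<phi> \<circ> u) m) ((\<phi> \<circ> u) n) < e / C"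
    using C cauchy unfolding Cauchy_def by (meson divide_pos_pos)
  have "dist (u m) (u n) < e" if "m \<ge> M" "n \<ge> M" for m n
  proof -
    have "dist (u m) (u n) / C \<le> dist (\<phi> (u m)) (\<phi> (u n))"
      using bl u unfolding bilipschitz_on_def by blast
    also have "\<dots> < e / C" using M that by simp
    finally show ?thesis using C by (simp add: divide_less_cancel)
  qed
  then show "\<exists>M. \<forall>m\<ge>M. \<forall>n\<ge>M. dist (u m) (u n) < e" by blast
qed

text \<open>In a complete space with bilipschitz charts of radius R0 into a Euclidean ball,
  closed balls of radius less than R0 are compact.\<close>

lemma bounded_geometry_compact_cball:
  assumes "bounded_geometry TYPE('a::metric_space) TYPE('e::euclidean_space)"
  obtains \<rho> where "\<rho> > 0" and "\<And>(x::'a) s. s < \<rho> \<Longrightarrow> compact (cball x s)"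
proof -
  obtain C R0 where C: "C \<ge> 1" and R0: "R0 > 0"
    and charts: "\<forall>x::'a. \<exists>\<phi>::'a \<Rightarrow> 'e. \<phi> ` ball x R0 \<subseteq> ball 0 R0 \<and> bilipschitz_on C (ball x R0) \<phi>"
    and complete: "complete (UNIV::'a set)"
    using assms unfolding bounded_geometry_def by blast
  have "compact (cball x s)" if s: "s < R0" for x :: 'a and s
    unfolding compact_eq_seq_compact_metric seq_compact_def
  proof (intro allI impI)
    fix u :: "nat \<Rightarrow> 'a" assume u: "\<forall>n. u n \<in> cball x s"
    obtain \<phi> :: "'a \<Rightarrow> 'e" where im: "\<phi> ` ball x R0 \<subseteq> ball 0 R0"
      and bl: "bilipschitz_on C (ball x R0) \<phi>"
      using charts by blast
    have u_chart: "u n \<in> ball x R0" for n using u[rule_format, of n] s by simp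
    have "bounded (range (\<phi> \<circ> u))"
      using u_chart im by (intro bounded_subset[OF bounded_ball]) auto
    then obtain l' and r :: "nat \<Rightarrow> nat" where r: "strict_mono r" and "((\<phi> \<circ> u) \<circ> r) \<longlonglongrightarrow> l'"
      using bounded_imp_convergent_subsequence by blast
    then have "Cauchy (\<phi> \<circ> (u \<circ> r))" by (simp add: LIMSEQ_imp_Cauchy o_assoc)
    then have "Cauchy (u \<circ> r)" using bilipschitz_Cauchy[OF bl] C u_chart by simp
    then obtain l where l: "(u \<circ> r) \<longlonglongrightarrow> l" using complete unfolding complete_def by blast
    have "l \<in> cball x s" using closed_sequentially[OF closed_cball _ l] u by simp
    then show "\<exists>l\<in>cball x s. \<exists>r. strict_mono r \<and> (u \<circ> r) \<longlonglongrightarrow> l" using r l by blast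
  qed
  then show ?thesis using that R0 by blast
qed

section \<open>The lower LQ-inclusion\<close>

definition locally_co_Lipschitz :: "real \<Rightarrow> real \<Rightarrow> ('a::metric_space \<Rightarrow> 'b::metric_space) \<Rightarrow> bool" where
  "locally_co_Lipschitz L \<rho> f \<longleftrightarrow> (\<forall>x s. 0 < s \<longrightarrow> s < \<rho> \<longrightarrow> ball (f x) (s / L) \<subseteq> f ` ball x s)"

text \<open>Where closed balls are compact, the lower inclusion passes to pointwise limits:
  preimages under fs j of a point z lie in a compact ball, and a limit point of them is
  an f-preimage of z.\<close>

lemma limit_locally_co_Lipschitz:
  fixes fs :: "nat \<Rightarrow> 'a::metric_space \<Rightarrow> 'b::metric_space"
  assumes LQ: "\<And>j. LQ_map L (fs j)" and lim: "\<And>x. (\<lambda>j. fs j x) \<longlonglongrightarrow> f x"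
    and compact: "\<And>(x::'a) s. s < \<rho> \<Longrightarrow> compact (cball x s)"
  shows "locally_co_Lipschitz L \<rho> f"
  unfolding locally_co_Lipschitz_def
proof (intro allI impI subsetI)
  fix x s z assume s: "0 < s" "s < \<rho>" and z: "z \<in> ball (f x) (s / L)"
  have L: "L > 0" using LQ_map_pos[OF LQ] .
  define d where "d = dist (f x) z"
  define s' where "s' = (s + L * d) / 2"
  have Ld: "L * d < s" using z L unfolding d_def by (simp add: field_simps)
  have "0 \<le> L * d" using L unfolding d_def by simp
  then have s': "L * d < s'" "s' < s" "0 < s'" using Ld unfolding s'_def by auto
  have "eventually (\<lambda>j. dist (fs j x) (f x) < s' / L - d) sequentially"
    using s' L by (intro tendstoD lim) (simp add: field_simps)
  then obtain N where N: "\<And>j. j \<ge> N \<Longrightarrow> dist (fs j x) (f x) < s' / L - d"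
    unfolding eventually_sequentially by blast
  have "\<exists>y. y \<in> cball x s' \<and> fs (n + N) y = z" for n
  proof -
    have "dist (fs (n + N) x) z \<le> dist (fs (n + N) x) (f x) + d"
      unfolding d_def by (rule dist_triangle)
    then have "z \<in> ball (fs (n + N) x) (s' / L)" using N[of "n + N"] by simp
    also have "\<dots> \<subseteq> fs (n + N) ` ball x s'" using LQ s' unfolding LQ_map_def by blast
    finally obtain y where "dist x y < s'" "fs (n + N) y = z" by auto
    then show ?thesis by (intro exI[of _ y]) simp
  qed
  then obtain u where u: "\<And>n. u n \<in> cball x s'" and fu: "\<And>n. fs (n + N) (u n) = z" by metis
  have "seq_compact (cball x s')"
    using compact[of s' x] s'(2) s(2) by (intro compact_imp_seq_compact) simp
  then obtain l r where l: "l \<in> cball x s'" and r: "strict_mono r" and ul: "(u \<circ> r) \<longlonglongrightarrow> l"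
    using seq_compactE u by blast
  have "strict_mono (\<lambda>n. r n + N)" using r by (simp add: strict_mono_def)
  then have gl: "(\<lambda>n. fs (r n + N) l) \<longlonglongrightarrow> f l"
    using LIMSEQ_subseq_LIMSEQ[OF lim] by (simp add: o_def)
  have "f l = z"
  proof (rule limit_of_preimages[of "\<lambda>n. fs (r n + N)" L l f "u \<circ> r" z])
    show "dist (fs (r n + N) a) (fs (r n + N) b) \<le> L * dist a b" for n a b
      by (rule LQ_map_lipschitz[OF LQ])
    show "fs (r n + N) ((u \<circ> r) n) = z" for n using fu by simp
  qed (use gl ul in simp_all)
  then show "z \<in> f ` ball x s" using l s' by force
qed

lemma lift_chain:
  assumes co: "locally_co_Lipschitz L \<rho> f" and L: "L > 0" and w0: "w 0 = f x"
    and steps: "\<And>i. i < m \<Longrightarrow> dist (w i) (w (Suc i)) < \<rho> / L" and \<epsilon>: "\<epsilon> > 0"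
  shows "\<exists>y. f y = w m \<and> dist x y < L * (\<Sum>i<m. dist (w i) (w (Suc i))) + \<epsilon>"
  using steps \<epsilon>
proof (induction m arbitrary: \<epsilon>)
  case 0
  then show ?case using w0 by (intro exI[of _ x]) simp
next
  case (Suc m)
  define d where "d = dist (w m) (w (Suc m))"
  define e where "e = min (\<epsilon> / 2) ((\<rho> - L * d) / 2)"
  have "L * d < \<rho>" using Suc.prems(1)[of m] L unfolding d_def by (simp add: field_simps)
  moreover have "e \<le> (\<rho> - L * d) / 2" "e \<le> \<epsilon> / 2"
    unfolding e_def by (rule min.cobounded2, rule min.cobounded1)
  ultimately have e: "e > 0" "L * d + e < \<rho>" "e \<le> \<epsilon> / 2"
    using Suc.prems(2) unfolding e_def by auto
  obtain y where y: "f y = w m" and dy: "dist x y < L * (\<Sum>i<m. dist (w i) (w (Suc i))) + \<epsilon> / 2"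
    using Suc.IH[of "\<epsilon> / 2"] Suc.prems by auto
  have "0 \<le> L * d" using L unfolding d_def by simp
  then have s: "0 < L * d + e" using e(1) by simp
  have "w (Suc m) \<in> ball (f y) ((L * d + e) / L)" using y L e unfolding d_def by (simp add: field_simps)
  also have "\<dots> \<subseteq> f ` ball y (L * d + e)"
    using co s e(2) unfolding locally_co_Lipschitz_def by blast
  finally obtain y' where y': "dist y y' < L * d + e" and fy': "f y' = w (Suc m)" by auto
  have "dist x y' \<le> dist x y + dist y y'" by (rule dist_triangle)
  also have "\<dots> < L * (\<Sum>i<Suc m. dist (w i) (w (Suc i))) + \<epsilon>"
    using dy y' e unfolding d_def by (simp add: algebra_simps)
  finally show ?case using fy' by blast
qed

lemma polygonal_sum_le_curve_length:
  assumes "t 0 = 0" "t m = 1" "\<And>i. i < m \<Longrightarrow> t i \<le> t (Suc i)"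
  shows "ereal (\<Sum>i<m. dist (\<gamma> (t i)) (\<gamma> (t (Suc i)))) \<le> curve_length \<gamma>"
  unfolding curve_length_def using assms by (intro SUP_upper2[of "(m, t)"]) auto

lemma length_space_chain:
  assumes "length_space TYPE('a)" and "dist a b < D" and "\<eta> > 0"
  obtains w :: "nat \<Rightarrow> 'a::metric_space" and m where "w 0 = a" "w m = b"
    "\<And>i. i < m \<Longrightarrow> dist (w i) (w (Suc i)) < \<eta>" "(\<Sum>i<m. dist (w i) (w (Suc i))) < D"
proof -
  have "(INF \<gamma> \<in> {\<gamma>. continuous_on {0..1} \<gamma> \<and> \<gamma> 0 = a \<and> \<gamma> 1 = b}. curve_length \<gamma>) < ereal D"
    using assms(1,2) unfolding length_space_def by (metis ereal_less_eq(3) not_le)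
  then obtain \<gamma> where \<gamma>: "continuous_on {0..1} \<gamma>" "\<gamma> 0 = a" "\<gamma> 1 = b"
    and len: "curve_length \<gamma> < ereal D"
    unfolding INF_less_iff by blast
  obtain \<delta> where \<delta>: "\<delta> > 0"
    and uc: "\<forall>s\<in>{0..1}. \<forall>t\<in>{0..1}. dist t s < \<delta> \<longrightarrow> dist (\<gamma> t) (\<gamma> s) < \<eta>"
    using compact_uniformly_continuous[OF \<gamma>(1) compact_Icc] assms(3)
    unfolding uniformly_continuous_on_def by metis
  obtain m :: nat where m: "1 / \<delta> < real m" using reals_Archimedean2 by blast
  then have m0: "m > 0" using \<delta> by (metis divide_pos_pos gr0I less_asym of_nat_0 zero_less_one)
  have m\<delta>: "1 / real m < \<delta>" using m \<delta> m0 by (simp add: divide_less_eq mult.commute)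
  define t where "t i = real i / real m" for i
  have t: "t 0 = 0" "t m = 1" "\<And>i. i < m \<Longrightarrow> t i \<le> t (Suc i)"
    using m0 unfolding t_def by (simp_all add: divide_right_mono)
  show ?thesis
  proof (rule that[of "\<lambda>i. \<gamma> (t i)" m])
    show "\<gamma> (t 0) = a" "\<gamma> (t m) = b" using t \<gamma> by simp_all
    show "dist (\<gamma> (t i)) (\<gamma> (t (Suc i))) < \<eta>" if "i < m" for i
    proof -
      have "t i \<in> {0..1}" "t (Suc i) \<in> {0..1}" using that m0 unfolding t_def by auto
      moreover have "dist (t (Suc i)) (t i) = 1 / real m"
        unfolding t_def dist_real_def using m0 by (simp add: diff_divide_distrib[symmetric])
      ultimately show ?thesis using uc m\<delta> by (metis dist_commute)
    qed
    have "ereal (\<Sum>i<m. dist (\<gamma> (t i)) (\<gamma> (t (Suc i)))) < ereal D"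
      using polygonal_sum_le_curve_length[OF t] len by (rule le_less_trans)
    then show "(\<Sum>i<m. dist (\<gamma> (t i)) (\<gamma> (t (Suc i)))) < D" by simp
  qed
qed

lemma length_space_co_Lipschitz:
  fixes f :: "'a::metric_space \<Rightarrow> 'b::metric_space"
  assumes ls: "length_space TYPE('b)" and co: "locally_co_Lipschitz L \<rho> f"
    and L: "L > 0" and \<rho>: "\<rho> > 0"
  shows "ball (f x) (r / L) \<subseteq> f ` ball x r"
proof
  fix z assume "z \<in> ball (f x) (r / L)"
  then have dz: "dist (f x) z < r / L" by simp
  have \<eta>: "\<rho> / L > 0" using L \<rho> by simp
  obtain w m where w: "w 0 = f x" "w m = z"
    and steps: "\<And>i. i < m \<Longrightarrow> dist (w i) (w (Suc i)) < \<rho> / L"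
    and sum: "(\<Sum>i<m. dist (w i) (w (Suc i))) < r / L"
    using length_space_chain[OF ls dz \<eta>] by blast
  define S where "S = (\<Sum>i<m. dist (w i) (w (Suc i)))"
  have "r - L * S > 0" using sum L unfolding S_def by (simp add: field_simps)
  from lift_chain[OF co L w(1) steps this] obtain y
    where "f y = w m" "dist x y < L * S + (r - L * S)"
    unfolding S_def by blast
  then show "z \<in> f ` ball x r" using w(2) by auto
qed

section \<open>Uniformly k-to-one\<close>

lemma finite_separation:
  fixes P :: "'a::metric_space set"
  assumes "finite P" and "P \<subseteq> ball x R"
  obtains \<epsilon> where "\<epsilon> > 0" "\<And>a b. a \<in> P \<Longrightarrow> b \<in> P \<Longrightarrow> a \<noteq> b \<Longrightarrow> 2 * \<epsilon> \<le> dist a b"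
    "\<And>y. y \<in> P \<Longrightarrow> dist x y + 2 * \<epsilon> \<le> R"
proof -
  have small: "eventually (\<lambda>\<epsilon>. 2 * \<epsilon> \<le> c) (at_right 0)" if "c > 0" for c :: real
    unfolding eventually_at_right_field using that by (intro exI[of _ "c / 2"]) auto
  have "eventually (\<lambda>\<epsilon>. \<forall>p\<in>{p \<in> P \<times> P. fst p \<noteq> snd p}. 2 * \<epsilon> \<le> dist (fst p) (snd p)) (at_right 0)"
    using assms(1) by (intro eventually_ball_finite ballI small) auto
  moreover have "eventually (\<lambda>\<epsilon>. \<forall>y\<in>P. 2 * \<epsilon> \<le> R - dist x y) (at_right 0)"
    using assms by (intro eventually_ball_finite ballI small) auto
  moreover have "eventually (\<lambda>\<epsilon>. \<epsilon> > 0) (at_right (0::real))"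
    by (simp add: eventually_at_right_less)
  ultimately have "eventually (\<lambda>\<epsilon>. \<epsilon> > 0 \<and> (\<forall>a\<in>P. \<forall>b\<in>P. a \<noteq> b \<longrightarrow> 2 * \<epsilon> \<le> dist a b)
      \<and> (\<forall>y\<in>P. dist x y + 2 * \<epsilon> \<le> R)) (at_right 0)"
    by eventually_elim auto
  from eventually_happens'[OF trivial_limit_at_right_real this] obtain \<epsilon> where \<epsilon>: "\<epsilon> > 0"
    and sep: "\<forall>a\<in>P. \<forall>b\<in>P. a \<noteq> b \<longrightarrow> 2 * \<epsilon> \<le> dist a b" and deep: "\<forall>y\<in>P. dist x y + 2 * \<epsilon> \<le> R"
    by blast
  show ?thesis by (rule that[OF \<epsilon>]) (use sep deep in auto)
qed

lemma move_into_fibres: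
  assumes LQ: "\<And>j. LQ_map L (fs j)" and lim: "\<And>x. (\<lambda>j. fs j x) \<longlonglongrightarrow> f x"
    and P: "finite P" and \<epsilon>: "\<epsilon> > 0"
  obtains N g where "\<And>y. y \<in> P \<Longrightarrow> dist y (g y) < \<epsilon> \<and> fs N (g y) = f y"
proof -
  have L: "L > 0" using LQ_map_pos[OF LQ] .
  have "\<epsilon> / L > 0" using \<epsilon> L by simp
  then have "eventually (\<lambda>j. \<forall>y\<in>P. dist (fs j y) (f y) < \<epsilon> / L) sequentially"
    using P by (intro eventually_ball_finite ballI tendstoD lim)
  then obtain N where N: "\<And>y. y \<in> P \<Longrightarrow> dist (fs N y) (f y) < \<epsilon> / L"
    unfolding eventually_sequentially by blast
  have "\<exists>v. dist y v < \<epsilon> \<and> fs N v = f y" if "y \<in> P" for y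
  proof -
    have "f y \<in> ball (fs N y) (\<epsilon> / L)" using N[OF that] by simp
    also have "\<dots> \<subseteq> fs N ` ball y \<epsilon>" using LQ \<epsilon> unfolding LQ_map_def by blast
    finally show ?thesis by auto
  qed
  then show ?thesis using that by metis
qed

text \<open>Finite parts of a fibre of the limit inside a ball of radius R have at most k
  points: moved into one fibre of fs N they stay distinct and within distance R.\<close>

lemma limit_fibre_card_le:
  assumes LQ: "\<And>j. LQ_map L (fs j)" and lim: "\<And>x. (\<lambda>j. fs j x) \<longlonglongrightarrow> f x"
    and kk: "\<And>j. uniformly_k_to_one R k (fs j)"
    and F: "finite F" "F \<subseteq> f -` {f x} \<inter> ball x R"
  shows "card F \<le> k"
proof (cases "F = {}")
  case False
  then obtain y where "y \<in> F" by blast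
  then have "dist x y < R" using F(2) by auto
  then have "R > 0" by (rule le_less_trans[OF zero_le_dist])
  define P where "P = insert x F"
  have P: "finite P" "P \<subseteq> ball x R" using F \<open>R > 0\<close> unfolding P_def by auto
  obtain \<epsilon> where \<epsilon>: "\<epsilon> > 0"
    and sep: "\<And>a b. a \<in> P \<Longrightarrow> b \<in> P \<Longrightarrow> a \<noteq> b \<Longrightarrow> 2 * \<epsilon> \<le> dist a b"
    and deep: "\<And>y. y \<in> P \<Longrightarrow> dist x y + 2 * \<epsilon> \<le> R"
    using finite_separation[OF P] by blast
  obtain N g where g: "\<And>y. y \<in> P \<Longrightarrow> dist y (g y) < \<epsilon> \<and> fs N (g y) = f y"
    using move_into_fibres[OF LQ lim P(1) \<epsilon>] by blast
  define B where "B = fs N -` {fs N (g x)} \<inter> ball (g x) R"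
  have B: "finite B" "card B \<le> k" using kk[of N] unfolding uniformly_k_to_one_def B_def by auto
  have gx: "dist (g x) x < \<epsilon>" "fs N (g x) = f x" using g[of x] unfolding P_def by (auto simp: dist_commute)
  have "g ` F \<subseteq> B"
  proof
    fix v assume "v \<in> g ` F"
    then obtain y where y: "y \<in> F" "v = g y" by blast
    have gy: "dist y v < \<epsilon>" "fs N v = f x" using g[of y] y F(2) unfolding P_def by auto
    have "dist (g x) v \<le> dist (g x) x + dist x y + dist y v"
      by (metis add_right_mono dist_triangle order_trans)
    also have "\<dots> < R" using gx gy deep[of y] y unfolding P_def by auto
    finally show "v \<in> B" using gx gy unfolding B_def by simp
  qed
  moreover have "inj_on g F"
  proof (rule inj_onI)
    fix a b assume ab: "a \<in> F" "b \<in> F" "g a = g b"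
    have "dist a b \<le> dist a (g a) + dist b (g b)" using dist_triangle3[of a b "g a"] ab(3) by (simp add: dist_commute)
    also have "\<dots> < 2 * \<epsilon>" using g[of a] g[of b] ab unfolding P_def by auto
    finally show "a = b" using sep[of a b] ab unfolding P_def by fastforce
  qed
  ultimately have "card F \<le> card B" by (metis B(1) card_image card_mono)
  then show ?thesis using B(2) by simp
qed simp

lemma limit_uniformly_k_to_one:
  assumes LQ: "\<And>j. LQ_map L (fs j)" and lim: "\<And>x. (\<lambda>j. fs j x) \<longlonglongrightarrow> f x"
    and kk: "\<And>j. uniformly_k_to_one R k (fs j)"
  shows "uniformly_k_to_one R k f"
  unfolding uniformly_k_to_one_def
proof
  fix x
  let ?A = "f -` {f x} \<inter> ball x R"
  have "finite ?A"
  proof (rule ccontr)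
    assume "infinite ?A"
    then obtain F where "finite F" "card F = Suc k" "F \<subseteq> ?A"
      using infinite_arbitrarily_large by blast
    then show False using limit_fibre_card_le[OF LQ lim kk] by fastforce
  qed
  then show "finite ?A \<and> card ?A \<le> k"
    using limit_fibre_card_le[OF LQ lim kk _ order_refl] by blast
qed

theorem theorem1p2:
  fixes fs :: "nat \<Rightarrow> 'a::metric_space \<Rightarrow> 'b::metric_space"
    and f :: "'a \<Rightarrow> 'b"
    and R L :: real and k :: nat
  assumes "bounded_geometry TYPE('a) TYPE('e::euclidean_space)"
    and "bounded_geometry TYPE('b) TYPE('e)"
    and "\<And>j. uniformly_k_to_one R k (fs j)"
    and "\<And>j. LQ_map L (fs j)"
    and "locally_uniform_convergence fs f"
    and "continuous_on UNIV f"
  shows "uniformly_k_to_one R k f \<and> LQ_map L f"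
proof -
  have lim: "\<And>x. (\<lambda>j. fs j x) \<longlonglongrightarrow> f x"
    using locally_uniform_convergence_pointwise[OF assms(5)] .
  have L: "L > 0" using LQ_map_pos[OF assms(4)] .
  obtain \<rho> where \<rho>: "\<rho> > 0" and compact: "\<And>(x::'a) s. s < \<rho> \<Longrightarrow> compact (cball x s)"
    using bounded_geometry_compact_cball[OF assms(1)] by blast
  have ls: "length_space TYPE('b)" using assms(2) unfolding bounded_geometry_def by blast
  have co: "locally_co_Lipschitz L \<rho> f"
    using limit_locally_co_Lipschitz[OF assms(4) lim compact] .
  have "LQ_map L f"
  proof (rule LQ_mapI[OF L])
    show "dist (f a) (f b) \<le> L * dist a b" for a b
      using lipschitz_pointwise_limit[OF LQ_map_lipschitz[OF assms(4)] lim] .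
    show "ball (f x) (r / L) \<subseteq> f ` ball x r" for x r
      using length_space_co_Lipschitz[OF ls co L \<rho>] .
  qed
  then show ?thesis using limit_uniformly_k_to_one[OF assms(4) lim assms(3)] by blast
qed

end
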